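(* If a hyperplane arrangement $\mathcal{H}\subset\mathbb{CP}^n$ is essential and irreducible, then there exist weights $a_H>0$ ($H\in\mathcal{H}$) such that for every $L\in\mathcal{L}$, $$\sum_{H\supset L}a_H<\frac{\operatorname{codim}L}{n+1}\sum_{H\in\mathcal{H}}a_H .$$
   Context: $\mathcal{H}$ is a finite set of distinct hyperplanes; $\mathcal{L}$ is the set of non-empty proper intersections of its members. $\mathcal{H}$ is essential if $\bigcap_HH=\emptyset$. A splitting is a decomposition $\mathcal{H}=\mathcal{H}_1\cup\mathcal{H}_2$ whose centres (intersections of members; $\mathbb{CP}^n$ for the empty collection) $T_1,T_2$ satisfy $T_1+T_2=\mathbb{CP}^n$ (projective span); non-trivial if both parts are non-empty; $\mathcal{H}$ is irreducible if it has no non-trivial splitting. *)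

theory Defs
  imports "HOL-Analysis.Analysis"
begin

text \<open>CP^n is modelled as the projectivisation of complex^'n with CARD('n) = n+1.
Projective subspaces correspond to complex-linear subspaces of complex^'n
(the empty projective subspace corresponds to the zero subspace).\<close>

definition proj_hyperplane :: "(complex^'n) set \<Rightarrow> bool" where
  "proj_hyperplane S \<longleftrightarrow> vec.subspace S \<and> vec.dim S = CARD('n) - 1"

definition arrangement :: "(complex^'n) set set \<Rightarrow> bool" where
  "arrangement \<H> \<longleftrightarrow> finite \<H> \<and> (\<forall>H\<in>\<H>. proj_hyperplane H)"

definition centre :: "(complex^'n) set set \<Rightarrow> (complex^'n) set" where
  "centre \<G> = \<Inter>\<G>"

definition flats :: "(complex^'n) set set \<Rightarrow> (complex^'n) set set" where
  "flats \<H> = {centre \<G> | \<G>. \<G> \<subseteq> \<H> \<and> centre \<G> \<noteq> {0} \<and> centre \<G> \<noteq> UNIV}"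

definition essential :: "(complex^'n) set set \<Rightarrow> bool" where
  "essential \<H> \<longleftrightarrow> centre \<H> = {0}"

definition proj_join :: "(complex^'n) set \<Rightarrow> (complex^'n) set \<Rightarrow> (complex^'n) set" where
  "proj_join S T = {x + y | x y. x \<in> S \<and> y \<in> T}"

definition splitting :: "(complex^'n) set set \<Rightarrow> (complex^'n) set set \<Rightarrow> (complex^'n) set set \<Rightarrow> bool" where
  "splitting \<H> \<H>1 \<H>2 \<longleftrightarrow> \<H>1 \<union> \<H>2 = \<H> \<and> proj_join (centre \<H>1) (centre \<H>2) = UNIV"

definition irreducible_arr :: "(complex^'n) set set \<Rightarrow> bool" where
  "irreducible_arr \<H> \<longleftrightarrow> \<not> (\<exists>\<H>1 \<H>2. splitting \<H> \<H>1 \<H>2 \<and> \<H>1 \<noteq> {} \<and> \<H>2 \<noteq> {})"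

definition proj_codim :: "(complex^'n) set \<Rightarrow> nat" where
  "proj_codim L = CARD('n) - vec.dim L"

end

theory Submission
  imports Defs
begin

text \<open>Call a set of n + 1 hyperplanes with trivial intersection a basis of the arrangement, and
weight each hyperplane by the number of bases containing it. A basis meets the hyperplanes
through a flat L in at most codim L members, so summing over all bases gives the inequality
with \<open>\<le>\<close>. If equality held for every basis, then, choosing a basis that contains a maximal
independent subset of the hyperplanes not through L, the centre of those hyperplanes would have
dimension at least codim L; meeting L only in 0, it would span the whole space together with L,
which is a non-trivial splitting.\<close>

lemma vec_dim_zero [simp]: "vec.dim ({0} :: ('a::field^'n) set) = 0"
  by (metis vec.dim_span vec.span_empty vec.dim_empty)

lemma vec_dim_psubset_subspace:
  fixes A H :: "('a::field^'n) set"
  assumes "vec.subspace A" "vec.subspace H" "\<not> A \<subseteq> H"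
  shows "vec.dim (A \<inter> H) < vec.dim A"
proof -
  have "vec.subspace (A \<inter> H)" using assms vec.subspace_inter by blast
  then have "vec.span (A \<inter> H) = A \<inter> H" "vec.span A = A" using assms by simp_all
  then have "vec.span (A \<inter> H) \<subset> vec.span A" using assms(3) by blast
  then show ?thesis by (rule vec.dim_psubset)
qed

lemma vec_sums_eq_UNIV_if_dim_complementary:
  fixes S T :: "('a::field^'n) set"
  assumes "vec.subspace S" "vec.subspace T" "S \<inter> T = {0}"
    and "CARD('n) \<le> vec.dim S + vec.dim T"
  shows "{x + y | x y. x \<in> S \<and> y \<in> T} = UNIV"
proof -
  let ?ST = "{x + y | x y. x \<in> S \<and> y \<in> T}"
  have "vec.dim ?ST + vec.dim {0 :: 'a^'n} = vec.dim S + vec.dim T"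
    using vec.dim_sums_Int[OF assms(1,2)] unfolding assms(3) .
  then have "vec.dim (UNIV :: ('a^'n) set) \<le> vec.dim ?ST"
    using assms(4) unfolding vec_dim_card vec_dim_zero by linarith
  then have "vec.span ?ST = vec.span UNIV"
    by (intro vec.dim_eq_span) simp_all
  moreover have "vec.span ?ST = ?ST"
    using vec.subspace_sums[OF assms(1,2)] by (rule vec.span_eq_iff[THEN iffD2])
  ultimately show ?thesis by simp
qed

lemma proj_hyperplane_subspace: "proj_hyperplane H \<Longrightarrow> vec.subspace H"
  by (simp add: proj_hyperplane_def)

lemma subspace_Inter_hyperplanes:
  "\<forall>H\<in>\<G>. proj_hyperplane H \<Longrightarrow> vec.subspace (\<Inter>\<G>)"
  by (intro vec.subspace_Inter) (auto simp: proj_hyperplane_def)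

lemma dim_le_dim_Int_hyperplane:
  fixes A H :: "(complex^'n) set"
  assumes "vec.subspace A" "proj_hyperplane H"
  shows "vec.dim A \<le> vec.dim (A \<inter> H) + 1"
proof -
  have "vec.dim {x + y | x y. x \<in> A \<and> y \<in> H} + vec.dim (A \<inter> H) = vec.dim A + vec.dim H"
    using vec.dim_sums_Int[OF assms(1) proj_hyperplane_subspace[OF assms(2)]] .
  moreover have "vec.dim {x + y | x y. x \<in> A \<and> y \<in> H} \<le> CARD('n)"
    by (rule dim_subset_UNIV_cart_gen)
  moreover have "vec.dim H = CARD('n) - 1"
    using assms(2) by (simp add: proj_hyperplane_def)
  ultimately show ?thesis by linarith
qed

lemma dim_le_dim_Int_Inter_hyperplanes:
  assumes "finite \<G>" "\<forall>H\<in>\<G>. proj_hyperplane H" "vec.subspace A"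
  shows "vec.dim A \<le> vec.dim (A \<inter> \<Inter>\<G>) + card \<G>"
  using assms
proof (induction \<G> rule: finite_induct)
  case empty
  then show ?case by simp
next
  case (insert H \<G>)
  have "vec.subspace (A \<inter> \<Inter>\<G>)"
    using insert subspace_Inter_hyperplanes[of \<G>] vec.subspace_inter by blast
  then have "vec.dim (A \<inter> \<Inter>\<G>) \<le> vec.dim (A \<inter> \<Inter>\<G> \<inter> H) + 1"
    using dim_le_dim_Int_hyperplane insert.prems by blast
  moreover have "A \<inter> \<Inter>(insert H \<G>) = A \<inter> \<Inter>\<G> \<inter> H" by auto
  ultimately show ?case using insert by auto
qed

definition independent_hyperplanes :: "(complex^'n) set set \<Rightarrow> bool" where
  "independent_hyperplanes \<I> \<longleftrightarrow> card \<I> + vec.dim (\<Inter>\<I>) = CARD('n)"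

lemma independent_hyperplanes_empty: "independent_hyperplanes {}"
  by (simp add: independent_hyperplanes_def card_cart_basis)

lemma independent_hyperplanes_insert:
  fixes \<I> :: "(complex^'n) set set"
  assumes "finite \<I>" "independent_hyperplanes \<I>" "\<forall>H\<in>\<I>. proj_hyperplane H"
    and "proj_hyperplane H" "\<not> \<Inter>\<I> \<subseteq> H"
  shows "independent_hyperplanes (insert H \<I>)"
proof -
  have sub: "vec.subspace (\<Inter>\<I>)" using assms(3) by (rule subspace_Inter_hyperplanes)
  have centre: "\<Inter>(insert H \<I>) = \<Inter>\<I> \<inter> H" by blast
  have "vec.dim (\<Inter>\<I>) \<le> vec.dim (\<Inter>\<I> \<inter> H) + 1"
    using dim_le_dim_Int_hyperplane[OF sub assms(4)] .
  moreover have "vec.dim (\<Inter>\<I> \<inter> H) < vec.dim (\<Inter>\<I>)"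
    using vec_dim_psubset_subspace[OF sub proj_hyperplane_subspace[OF assms(4)] assms(5)] .
  ultimately have "vec.dim (\<Inter>(insert H \<I>)) + 1 = vec.dim (\<Inter>\<I>)"
    unfolding centre by linarith
  moreover have "H \<notin> \<I>" using assms(5) by blast
  then have "card (insert H \<I>) = card \<I> + 1" using assms(1) by simp
  ultimately show ?thesis
    using assms(2) unfolding independent_hyperplanes_def by linarith
qed

lemma independent_hyperplanes_extend:
  assumes "finite \<H>" "\<forall>H\<in>\<H>. proj_hyperplane H" "\<I> \<subseteq> \<H>" "independent_hyperplanes \<I>"
  obtains \<B> where "\<I> \<subseteq> \<B>" "\<B> \<subseteq> \<H>" "independent_hyperplanes \<B>" "\<Inter>\<B> = \<Inter>\<H>"
  using assms
proof (induction "card (\<H> - \<I>)" arbitrary: \<I> rule: less_induct)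
  case less
  show ?case
  proof (cases "\<Inter>\<I> = \<Inter>\<H>")
    case True
    with less.prems(1,4,5) show ?thesis by blast
  next
    case False
    moreover have "\<Inter>\<H> \<subseteq> \<Inter>\<I>" using less.prems(4) by (rule Inter_anti_mono)
    ultimately obtain H where H: "H \<in> \<H>" "\<not> \<Inter>\<I> \<subseteq> H" by blast
    have "finite \<I>" using finite_subset[OF less.prems(4,2)] .
    then have indep: "independent_hyperplanes (insert H \<I>)"
      using less.prems(3-5) H by (intro independent_hyperplanes_insert) auto
    have fewer: "card (\<H> - insert H \<I>) < card (\<H> - \<I>)"
      using H less.prems(2) by (intro psubset_card_mono) auto
    have larger: "insert H \<I> \<subseteq> \<H>" using H(1) less.prems(4) by blast
    show ?thesis
    proof (rule less.hyps[OF fewer _ less.prems(2,3) larger indep])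
      fix \<B> assume B: "insert H \<I> \<subseteq> \<B>" "\<B> \<subseteq> \<H>" "independent_hyperplanes \<B>" "\<Inter>\<B> = \<Inter>\<H>"
      from B(1) have "\<I> \<subseteq> \<B>" by blast
      then show thesis using B(2-4) by (rule less.prems(1))
    qed
  qed
qed

definition arr_bases :: "(complex^'n) set set \<Rightarrow> (complex^'n) set set set" where
  "arr_bases \<H> = {\<B>. \<B> \<subseteq> \<H> \<and> card \<B> = CARD('n) \<and> \<Inter>\<B> = {0}}"

lemma finite_arr_bases: "finite \<H> \<Longrightarrow> finite (arr_bases \<H>)"
  unfolding arr_bases_def by (rule finite_subset[of _ "Pow \<H>"]) auto

lemma arr_basisD:
  fixes \<H> :: "(complex^'n) set set"
  assumes "arrangement \<H>" "\<B> \<in> arr_bases \<H>"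
  shows "\<B> \<subseteq> \<H>" "card \<B> = CARD('n)" "\<Inter>\<B> = {0}"
    and "finite \<B>" "\<forall>H\<in>\<B>. proj_hyperplane H"
proof -
  show sub: "\<B> \<subseteq> \<H>" "card \<B> = CARD('n)" "\<Inter>\<B> = {0}"
    using assms(2) by (simp_all add: arr_bases_def)
  have "finite \<H>" "\<forall>H\<in>\<H>. proj_hyperplane H"
    using assms(1) by (simp_all add: arrangement_def)
  then show "finite \<B>" "\<forall>H\<in>\<B>. proj_hyperplane H"
    using sub(1) finite_subset by auto
qed

lemma independent_hyperplanes_in_arr_basis:
  assumes "arrangement \<H>" "essential \<H>" "\<I> \<subseteq> \<H>" "independent_hyperplanes \<I>"
  obtains \<B> where "\<B> \<in> arr_bases \<H>" "\<I> \<subseteq> \<B>"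
proof -
  have "finite \<H>" "\<forall>H\<in>\<H>. proj_hyperplane H"
    using assms(1) by (auto simp: arrangement_def)
  from independent_hyperplanes_extend[OF this assms(3,4)]
  obtain \<B> where "\<I> \<subseteq> \<B>" "\<B> \<subseteq> \<H>" "independent_hyperplanes \<B>" "\<Inter>\<B> = \<Inter>\<H>" .
  moreover have "\<Inter>\<H> = {0}"
    using assms(2) by (simp add: essential_def centre_def)
  ultimately show ?thesis
    using that by (simp add: arr_bases_def independent_hyperplanes_def)
qed

lemma card_arr_basis_subset_le_codim:
  fixes \<H> :: "(complex^'n) set set"
  assumes "arrangement \<H>" "\<B> \<in> arr_bases \<H>" "\<C> \<subseteq> \<B>" "\<forall>H\<in>\<C>. L \<subseteq> H"
  shows "card \<C> \<le> CARD('n) - vec.dim L"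
proof -
  note B = arr_basisD[OF assms(1,2)]
  note fin = B(4) and hyp = B(5)
  have "\<C> \<union> (\<B> - \<C>) = \<B>" using assms(3) by blast
  then have centre: "\<Inter>\<C> \<inter> \<Inter>(\<B> - \<C>) = {0}"
    using B(3) by (metis Inter_Un_distrib)
  have "vec.dim L \<le> vec.dim (\<Inter>\<C>)"
    using assms(4) by (intro vec.dim_subset) blast
  also have "\<dots> \<le> vec.dim (\<Inter>\<C> \<inter> \<Inter>(\<B> - \<C>)) + card (\<B> - \<C>)"
    using hyp assms(3) fin
    by (intro dim_le_dim_Int_Inter_hyperplanes subspace_Inter_hyperplanes) auto
  finally have "vec.dim L \<le> card (\<B> - \<C>)"
    unfolding centre by simp
  moreover have "card (\<B> - \<C>) = CARD('n) - card \<C>"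
    using B(2) card_Diff_subset[OF finite_subset[OF assms(3) fin] assms(3)] by simp
  moreover have "card \<C> \<le> CARD('n)"
    using B(2) card_mono[OF fin assms(3)] by simp
  ultimately show ?thesis by linarith
qed

lemma exists_arr_basis_card_Diff_le_dim:
  fixes \<H> :: "(complex^'n) set set"
  assumes "arrangement \<H>" "essential \<H>" "\<G> \<subseteq> \<H>"
  obtains \<B> where "\<B> \<in> arr_bases \<H>" "card (\<B> - \<G>) \<le> vec.dim (\<Inter>\<G>)"
proof -
  have "finite \<G>" using finite_subset[OF assms(3)] assms(1) by (simp add: arrangement_def)
  moreover have "\<forall>H\<in>\<G>. proj_hyperplane H" using assms(1,3) by (auto simp: arrangement_def)
  ultimately obtain \<I> where I: "\<I> \<subseteq> \<G>" "independent_hyperplanes \<I>" "\<Inter>\<I> = \<Inter>\<G>"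
    by (rule independent_hyperplanes_extend[OF _ _ empty_subsetI independent_hyperplanes_empty])
  have "\<I> \<subseteq> \<H>" using I(1) assms(3) by (rule order_trans)
  then obtain \<B> where B: "\<B> \<in> arr_bases \<H>" "\<I> \<subseteq> \<B>"
    using I(2) by (rule independent_hyperplanes_in_arr_basis[OF assms(1,2)])
  note fin = arr_basisD(4,2)[OF assms(1) B(1)]
  have "card (\<B> - \<G>) \<le> card (\<B> - \<I>)"
    using I(1) fin(1) by (intro card_mono) auto
  also have "card (\<B> - \<I>) = CARD('n) - card \<I>"
    using card_Diff_subset[OF finite_subset[OF B(2) fin(1)] B(2)] fin(2) by simp
  also have "\<dots> = vec.dim (\<Inter>\<G>)"
    using I(2)[unfolded independent_hyperplanes_def I(3)] by linarith
  finally show ?thesis using B(1) that by blast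
qed

lemma exists_arr_basis_mem:
  fixes \<H> :: "(complex^'n) set set"
  assumes "arrangement \<H>" "essential \<H>" "H \<in> \<H>"
  obtains \<B> where "\<B> \<in> arr_bases \<H>" "H \<in> \<B>"
proof -
  have "vec.dim H = CARD('n) - 1"
    using assms(1,3) by (simp add: arrangement_def proj_hyperplane_def)
  moreover have "0 < CARD('n)" by simp
  ultimately have indep: "independent_hyperplanes {H}"
    unfolding independent_hyperplanes_def by simp
  have "{H} \<subseteq> \<H>" using assms(3) by simp
  then obtain \<B> where "\<B> \<in> arr_bases \<H>" "{H} \<subseteq> \<B>"
    using indep by (rule independent_hyperplanes_in_arr_basis[OF assms(1,2)])
  with that show ?thesis by simp
qed

lemma dim_centres_less_if_irreducible:
  fixes \<H> :: "(complex^'n) set set"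
  assumes "arrangement \<H>" "essential \<H>" "irreducible_arr \<H>"
    and "\<F> \<subseteq> \<H>" "\<F> \<noteq> {}" "\<H> - \<F> \<noteq> {}"
  shows "vec.dim (\<Inter>\<F>) + vec.dim (\<Inter>(\<H> - \<F>)) < CARD('n)"
proof (rule ccontr)
  assume dims: "\<not> ?thesis"
  have hyp: "\<forall>H\<in>\<H>. proj_hyperplane H" using assms(1) by (simp add: arrangement_def)
  have "\<F> \<union> (\<H> - \<F>) = \<H>" using assms(4) by blast
  then have "\<Inter>\<F> \<inter> \<Inter>(\<H> - \<F>) = \<Inter>\<H>" by (metis Inter_Un_distrib)
  also have "\<dots> = {0}" using assms(2) by (simp add: essential_def centre_def)
  finally have "{x + y | x y. x \<in> \<Inter>\<F> \<and> y \<in> \<Inter>(\<H> - \<F>)} = UNIV"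
    using dims hyp assms(4)
    by (intro vec_sums_eq_UNIV_if_dim_complementary subspace_Inter_hyperplanes) auto
  then have "splitting \<H> \<F> (\<H> - \<F>)"
    using assms(4) unfolding splitting_def proj_join_def centre_def by blast
  then show False
    using assms(3,5,6) unfolding irreducible_arr_def by blast
qed

lemma exists_arr_basis_card_Int_less_codim:
  fixes \<H> :: "(complex^'n) set set"
  assumes "arrangement \<H>" "essential \<H>" "irreducible_arr \<H>" "L \<in> flats \<H>"
  obtains \<B> where "\<B> \<in> arr_bases \<H>" "card (\<B> \<inter> {H\<in>\<H>. L \<subseteq> H}) < CARD('n) - vec.dim L"
proof -
  define \<F> where "\<F> = {H\<in>\<H>. L \<subseteq> H}"
  have F: "\<F> \<subseteq> \<H>" unfolding \<F>_def by blast
  obtain \<G> where G: "\<G> \<subseteq> \<H>" "L = \<Inter>\<G>" "L \<noteq> {0}" "L \<noteq> UNIV"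
    using assms(4) by (auto simp: flats_def centre_def)
  have "\<G> \<subseteq> \<F>" using G(1,2) unfolding \<F>_def by blast
  then have L: "\<Inter>\<F> = L"
    using G(2) unfolding \<F>_def by blast
  have "\<F> \<noteq> {}" using G(4) L by auto
  moreover have "\<H> - \<F> \<noteq> {}"
  proof
    assume "\<H> - \<F> = {}"
    then have "\<F> = \<H>" using F by blast
    then show False using G(3) L assms(2) by (simp add: essential_def centre_def)
  qed
  ultimately have dims: "vec.dim L + vec.dim (\<Inter>(\<H> - \<F>)) < CARD('n)"
    using dim_centres_less_if_irreducible[OF assms(1-3) F] L by simp
  obtain \<B> where B: "\<B> \<in> arr_bases \<H>" "card (\<B> - (\<H> - \<F>)) \<le> vec.dim (\<Inter>(\<H> - \<F>))"
    using exists_arr_basis_card_Diff_le_dim[OF assms(1,2), of "\<H> - \<F>"] by blast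
  have "\<B> - (\<H> - \<F>) = \<B> \<inter> \<F>"
    using B(1) unfolding arr_bases_def by blast
  with B(2) have "card (\<B> \<inter> \<F>) \<le> vec.dim (\<Inter>(\<H> - \<F>))" by (simp only:)
  with dims have "card (\<B> \<inter> \<F>) < CARD('n) - vec.dim L" by linarith
  then show ?thesis using that B(1) unfolding \<F>_def by blast
qed

lemma sum_card_filter_mem_eq_sum_card_Int:
  assumes "finite \<B>" "finite S"
  shows "(\<Sum>h\<in>S. card {B\<in>\<B>. h \<in> B}) = (\<Sum>B\<in>\<B>. card (B \<inter> S))"
proof -
  have "(\<Sum>h\<in>S. card {B\<in>\<B>. h \<in> B}) = (\<Sum>h\<in>S. \<Sum>B\<in>\<B>. if h \<in> B then 1 else 0)"
    by (simp add: sum.inter_filter[OF assms(1), symmetric])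
  also have "\<dots> = (\<Sum>B\<in>\<B>. \<Sum>h\<in>S. if h \<in> B then 1 else 0)"
    by (rule sum.swap)
  also have "\<dots> = (\<Sum>B\<in>\<B>. card {h\<in>S. h \<in> B})"
    by (simp add: sum.inter_filter[OF assms(2), symmetric])
  also have "\<dots> = (\<Sum>B\<in>\<B>. card (B \<inter> S))"
    by (intro sum.cong refl arg_cong[where f = card]) blast
  finally show ?thesis .
qed

definition arr_basis_count :: "(complex^'n) set set \<Rightarrow> (complex^'n) set \<Rightarrow> nat" where
  "arr_basis_count \<H> H = card {\<B> \<in> arr_bases \<H>. H \<in> \<B>}"

lemma arr_basis_count_pos:
  fixes \<H> :: "(complex^'n) set set"
  assumes "arrangement \<H>" "essential \<H>" "H \<in> \<H>"
  shows "0 < arr_basis_count \<H> H"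
proof -
  obtain \<B> where "\<B> \<in> arr_bases \<H>" "H \<in> \<B>"
    by (rule exists_arr_basis_mem[OF assms])
  moreover have "finite (arr_bases \<H>)"
    using assms(1) by (simp add: arrangement_def finite_arr_bases)
  ultimately show ?thesis
    unfolding arr_basis_count_def by (auto simp: card_gt_0_iff)
qed

lemma sum_arr_basis_count:
  fixes \<H> :: "(complex^'n) set set"
  assumes "arrangement \<H>" "\<S> \<subseteq> \<H>"
  shows "(\<Sum>H\<in>\<S>. arr_basis_count \<H> H) = (\<Sum>\<B>\<in>arr_bases \<H>. card (\<B> \<inter> \<S>))"
proof -
  have "finite \<H>" using assms(1) by (simp add: arrangement_def)
  then show ?thesis
    unfolding arr_basis_count_def
    by (intro sum_card_filter_mem_eq_sum_card_Int finite_arr_bases finite_subset[OF assms(2)])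
qed

lemma sum_arr_basis_count_all:
  fixes \<H> :: "(complex^'n) set set"
  assumes "arrangement \<H>"
  shows "(\<Sum>H\<in>\<H>. arr_basis_count \<H> H) = CARD('n) * card (arr_bases \<H>)"
proof -
  have "(\<Sum>H\<in>\<H>. arr_basis_count \<H> H) = (\<Sum>\<B>\<in>arr_bases \<H>. card (\<B> \<inter> \<H>))"
    using sum_arr_basis_count[OF assms order_refl] .
  also have "\<dots> = (\<Sum>\<B>\<in>arr_bases \<H>. CARD('n))"
  proof (rule sum.cong[OF refl])
    fix \<B> assume "\<B> \<in> arr_bases \<H>"
    with arr_basisD(1,2)[OF assms this] show "card (\<B> \<inter> \<H>) = CARD('n)"
      by (simp add: Int_absorb2)
  qed
  finally show ?thesis by simp
qed

lemma sum_arr_basis_count_flat_less: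
  fixes \<H> :: "(complex^'n) set set"
  assumes "arrangement \<H>" "essential \<H>" "irreducible_arr \<H>" "L \<in> flats \<H>"
  shows "(\<Sum>H\<in>{H\<in>\<H>. L \<subseteq> H}. arr_basis_count \<H> H)
    < (CARD('n) - vec.dim L) * card (arr_bases \<H>)"
proof -
  let ?\<F> = "{H\<in>\<H>. L \<subseteq> H}"
  have "(\<Sum>H\<in>?\<F>. arr_basis_count \<H> H) = (\<Sum>\<B>\<in>arr_bases \<H>. card (\<B> \<inter> ?\<F>))"
    by (rule sum_arr_basis_count[OF assms(1)]) blast
  also have "\<dots> < (\<Sum>\<B>\<in>arr_bases \<H>. CARD('n) - vec.dim L)"
  proof (rule sum_strict_mono_ex1)
    show "finite (arr_bases \<H>)"
      using assms(1) by (simp add: arrangement_def finite_arr_bases)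
    show "\<forall>\<B>\<in>arr_bases \<H>. card (\<B> \<inter> ?\<F>) \<le> CARD('n) - vec.dim L"
    proof
      fix \<B> assume "\<B> \<in> arr_bases \<H>"
      then show "card (\<B> \<inter> ?\<F>) \<le> CARD('n) - vec.dim L"
        by (rule card_arr_basis_subset_le_codim[OF assms(1)]) auto
    qed
    obtain \<B> where "\<B> \<in> arr_bases \<H>" "card (\<B> \<inter> ?\<F>) < CARD('n) - vec.dim L"
      by (rule exists_arr_basis_card_Int_less_codim[OF assms])
    then show "\<exists>\<B>\<in>arr_bases \<H>. card (\<B> \<inter> ?\<F>) < CARD('n) - vec.dim L" ..
  qed
  also have "\<dots> = (CARD('n) - vec.dim L) * card (arr_bases \<H>)"
    by simp
  finally show ?thesis .
qed

theorem corollaryB2: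
  fixes \<H> :: "(complex^'n) set set"
  assumes "arrangement \<H>" and "essential \<H>" and "irreducible_arr \<H>"
  shows "\<exists>a :: (complex^'n) set \<Rightarrow> real. (\<forall>H\<in>\<H>. a H > 0) \<and>
           (\<forall>L\<in>flats \<H>. (\<Sum>H\<in>{H\<in>\<H>. L \<subseteq> H}. a H)
              < real (proj_codim L) / real CARD('n) * (\<Sum>H\<in>\<H>. a H))"
proof -
  let ?a = "\<lambda>H. real (arr_basis_count \<H> H)"
  show ?thesis
  proof (rule exI[of _ ?a], intro conjI ballI)
    show "?a H > 0" if "H \<in> \<H>" for H
      using arr_basis_count_pos[OF assms(1,2) that] by simp
    fix L assume L: "L \<in> flats \<H>"
    have "(\<Sum>H\<in>{H\<in>\<H>. L \<subseteq> H}. ?a H) < real ((CARD('n) - vec.dim L) * card (arr_bases \<H>))"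
      unfolding of_nat_sum[symmetric] of_nat_less_iff
      by (rule sum_arr_basis_count_flat_less[OF assms L])
    also have "\<dots> = real (proj_codim L) / real CARD('n) * (\<Sum>H\<in>\<H>. ?a H)"
      unfolding of_nat_sum[symmetric] sum_arr_basis_count_all[OF assms(1)] proj_codim_def
      by simp
    finally show "(\<Sum>H\<in>{H\<in>\<H>. L \<subseteq> H}. ?a H) < real (proj_codim L) / real CARD('n) * (\<Sum>H\<in>\<H>. ?a H)" .
  qed
qed

end
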